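(* Let $c>0$, $\epsilon>0$, $T>0$, and let $\{\phi^j_t\}_{j\ge0}$, $t\in[0,T]$, be the solution of the infinite system $$\dot\phi^0_t=(\phi^0_t)^2-\epsilon,\ \phi^0_T=c;\qquad \dot\phi^1_t=2\phi^0_t\phi^1_t+\epsilon,\ \phi^1_T=-c;\qquad \dot\phi^j_t=\sum_{k=0}^{j}\phi^k_t\phi^{j-k}_t,\ \phi^j_T=0\ (j\ge2).$$ Then for every $t\in[0,T]$, $$\phi^0_t=\frac{(-\epsilon-c\sqrt\epsilon)e^{2\sqrt\epsilon(T-t)}+\epsilon-c\sqrt\epsilon}{(-\sqrt\epsilon-c)e^{2\sqrt\epsilon(T-t)}-\sqrt\epsilon+c}>0,$$ the series $\sum_{j\ge0}\phi^j_t$ converges and $\sum_{j=0}^\infty\phi^j_t=0$. Moreover the generating function $S_t(z)=\sum_{k\ge0}z^k\phi^k_t$ satisfies $S_t(1)=0$ and, for $0\le z<1$ (writing $w=\sqrt{\epsilon(1-z)}$), $$S_t(z)=\frac{(-\epsilon(1-z)-c\,w(1-z))e^{2w(T-t)}+\epsilon(1-z)-c\,w(1-z)}{(-w-c(1-z))e^{2w(T-t)}-w+c(1-z)},$$ so the $\phi^k_t$ are the Taylor coefficients of this function in $z$.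
   Context: Note that each equation for $\phi^j$ involves only $\phi^0,\dots,\phi^j$ (the equation for $\phi^j$, $j\ge1$, is linear in $\phi^j$ given the lower-index functions), so the system is solved recursively. *)

theory Defs
  imports "HOL-Analysis.Analysis"
begin

end

theory Submission
  imports Defs
begin

text \<open>
  The signs are forced: for \<open>j \<ge> 1\<close> the equation for \<open>\<phi>\<^sup>j\<close> is linear in \<open>\<phi>\<^sup>j\<close> with a nonnegative
  source, so \<open>\<phi>\<^sup>j \<le> 0\<close> by induction on \<open>j\<close>; and the partial sums \<open>P\<^sub>n = \<Sum>\<^sub>k\<^sub><\<^sub>n \<phi>\<^sup>k\<close> (\<open>n \<ge> 2\<close>)
  satisfy \<open>P\<^sub>n' \<le> P\<^sub>n\<^sup>2\<close> and vanish at \<open>T\<close>, hence stay nonnegative. Thus \<open>|\<phi>\<^sup>k| \<le> \<phi>\<^sup>0\<close>, so for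
  \<open>0 \<le> z < 1\<close> the generating function \<open>S(z) = \<Sum> z\<^sup>k \<phi>\<^sup>k\<close> can be differentiated termwise; by the
  Cauchy product it solves the scalar Riccati equation \<open>S' = S\<^sup>2 - \<epsilon>(1 - z)\<close> with \<open>S(T) = c(1 - z)\<close>,
  whose solution is explicit and unique by a comparison argument. Taking \<open>z = 0\<close> gives \<open>\<phi>\<^sup>0\<close>.
  Finally \<open>\<Sum> \<phi>\<^sup>k\<close> converges absolutely, is nonnegative, and is bounded by
  \<open>S(z) \<le> c(1 - z) + \<surd>(\<epsilon>(1 - z))\<close>, which tends to \<open>0\<close> as \<open>z \<rightarrow> 1\<close>.\<close>

lemma summable_Suc_times_power:
  fixes z :: real
  assumes "0 \<le> z" "z < 1"
  shows "summable (\<lambda>k. real (Suc k) * z ^ k)"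
proof -
  have "summable (\<lambda>k. diffs (\<lambda>_. 1::real) k * z ^ k)"
    by (rule termdiff_converges[where K = 1]) (use assms in auto)
  then show ?thesis by (simp add: diffs_def)
qed

definition dipole :: "real \<Rightarrow> nat \<Rightarrow> real" where
  "dipole x k = (if k = 0 then x else if k = 1 then - x else 0)"

lemma sum_lessThan_dipole:
  assumes "2 \<le> n"
  shows "(\<Sum>k<n. dipole x k) = 0"
proof -
  have "(\<Sum>k<n. dipole x k) = (\<Sum>k\<in>{0,1}. dipole x k)"
    using assms by (intro sum.mono_neutral_right) (auto simp: dipole_def)
  then show ?thesis by (simp add: dipole_def)
qed

lemma sums_power_dipole: "(\<lambda>k. z ^ k * dipole x k) sums (x * (1 - z))"
proof -
  have "(\<lambda>k. z ^ k * dipole x k) sums (\<Sum>k\<in>{0,1}. z ^ k * dipole x k)"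
    by (rule sums_finite) (auto simp: dipole_def)
  then show ?thesis by (simp add: dipole_def algebra_simps)
qed

lemma abs_dipole_le: "\<bar>dipole x k\<bar> \<le> \<bar>x\<bar>"
  by (simp add: dipole_def)

lemma sum_convolution_le_square:
  fixes x :: "nat \<Rightarrow> 'a::linordered_idom"
  assumes "\<And>i. 1 \<le> i \<Longrightarrow> x i \<le> 0"
  shows "(\<Sum>k<n. \<Sum>i=0..k. x i * x (k - i)) \<le> (\<Sum>k<n. x k) ^ 2"
proof -
  have "(\<Sum>k<n. \<Sum>i=0..k. x i * x (k - i)) = (\<Sum>(i, j)\<in>{(i, j). i + j < n}. x i * x j)"
    unfolding atLeast0AtMost by (rule sum.triangle_reindex[symmetric])
  also have "\<dots> \<le> (\<Sum>(i, j)\<in>{..<n} \<times> {..<n}. x i * x j)"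
  proof (rule sum_mono2)
    fix p assume p: "p \<in> {..<n} \<times> {..<n} - {(i, j). i + j < n}"
    obtain i j where "p = (i, j)" by fastforce
    with p have "x i \<le> 0" "x j \<le> 0" by (auto intro!: assms)
    then show "0 \<le> (case p of (i, j) \<Rightarrow> x i * x j)"
      using \<open>p = (i, j)\<close> by (simp add: mult_nonpos_nonpos)
  qed auto
  also have "\<dots> = (\<Sum>k<n. x k) ^ 2"
    by (simp add: power2_eq_square sum_product sum.cartesian_product)
  finally show ?thesis .
qed

section \<open>A comparison principle for backward differential inequalities\<close>

lemma first_nonneg_point:
  fixes D :: "real \<Rightarrow> real"
  assumes "a \<le> b" "continuous_on {a..b} D" "D a < 0" "0 \<le> D b"
  obtains t where "a < t" "t \<le> b" "0 \<le> D t" "\<And>s. a \<le> s \<Longrightarrow> s < t \<Longrightarrow> D s < 0"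
proof -
  define Z where "Z = {a..b} \<inter> D -` {0..}"
  have "closed Z"
    unfolding Z_def by (intro continuous_closed_preimage assms) auto
  moreover have "b \<in> Z" "bdd_below Z"
    using assms by (auto simp: Z_def intro: bdd_belowI[of _ a])
  ultimately have InfZ: "Inf Z \<in> Z"
    using closed_contains_Inf by blast
  show ?thesis
  proof
    show "a < Inf Z" "Inf Z \<le> b" "0 \<le> D (Inf Z)"
      using InfZ assms(3) by (auto simp: Z_def less_eq_real_def)
    show "D s < 0" if "a \<le> s" "s < Inf Z" for s
      using that cInf_lower[OF _ \<open>bdd_below Z\<close>, of s] InfZ by (force simp: Z_def)
  qed
qed

lemma backward_comparison_nonneg:
  fixes D D' q :: "real \<Rightarrow> real"
  assumes der: "\<And>s. s \<in> {a..b} \<Longrightarrow> (D has_real_derivative D' s) (at s within {a..b})"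
    and "continuous_on {a..b} q"
    and "0 \<le> D b"
    and ineq: "\<And>s. s \<in> {a..b} \<Longrightarrow> D s < 0 \<Longrightarrow> D' s \<le> q s * D s"
    and t: "t \<in> {a..b}"
  shows "0 \<le> D t"
proof (rule ccontr)
  assume "\<not> 0 \<le> D t"
  have "continuous_on {a..b} D"
    using der by (rule DERIV_continuous_on)
  then have "continuous_on {t..b} D"
    by (rule continuous_on_subset) (use t in auto)
  then obtain t1 where t1: "t < t1" "t1 \<le> b" "0 \<le> D t1" "\<And>s. t \<le> s \<Longrightarrow> s < t1 \<Longrightarrow> D s < 0"
    using first_nonneg_point[of t b D] t \<open>0 \<le> D b\<close> \<open>\<not> 0 \<le> D t\<close> by (metis atLeastAtMost_iff not_le)
  obtain A where A: "\<And>s. s \<in> {a..b} \<Longrightarrow> \<bar>q s\<bar> \<le> A"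
    using compact_imp_bounded[OF compact_continuous_image[OF assms(2) compact_Icc]]
    by (force simp: bounded_iff)
  \<comment> \<open>The weight \<open>exp (A s)\<close> makes \<open>h\<close> nonincreasing on \<open>[t, t1]\<close>, yet \<open>D t < 0 \<le> D t1\<close>.\<close>
  define h where "h s = D s * exp (A * s)" for s
  have "h t1 \<le> h t"
  proof (rule DERIV_nonpos_imp_decreasing_open[of t t1 h])
    fix s assume s: "t < s" "s < t1"
    then have "s \<in> {a..b}" "at s within {a..b} = at s"
      using t t1 by (auto intro!: at_within_Icc_at)
    moreover have "D' s \<le> - A * D s"
      using ineq[of s] t1(4)[of s] A[of s] s \<open>s \<in> {a..b}\<close>
      by (smt (verit, best) mult_le_cancel_right mult_minus_left)
    ultimately have "(h has_real_derivative (D' s + A * D s) * exp (A * s)) (at s)"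
      using der[of s] unfolding h_def by (auto intro!: derivative_eq_intros simp: algebra_simps)
    moreover have "(D' s + A * D s) * exp (A * s) \<le> 0"
      using \<open>D' s \<le> - A * D s\<close> by (simp add: mult_nonpos_nonneg)
    ultimately show "\<exists>y. DERIV h s :> y \<and> y \<le> 0" by blast
  next
    show "continuous_on {t..t1} h"
      unfolding h_def using \<open>continuous_on {t..b} D\<close> t1
      by (intro continuous_intros) (auto elim: continuous_on_subset)
  qed (use t1 in simp)
  moreover have "h t < 0" "0 \<le> h t1"
    using \<open>\<not> 0 \<le> D t\<close> t1(3) by (auto simp: h_def mult_neg_pos)
  ultimately show False by simp
qed

lemma backward_riccati_unique:
  fixes f g r :: "real \<Rightarrow> real"
  assumes f: "\<And>s. s \<in> {a..b} \<Longrightarrow> (f has_real_derivative f s ^ 2 + r s) (at s within {a..b})"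
    and g: "\<And>s. s \<in> {a..b} \<Longrightarrow> (g has_real_derivative g s ^ 2 + r s) (at s within {a..b})"
    and "f b = g b" "t \<in> {a..b}"
  shows "f t = g t"
proof -
  \<comment> \<open>The difference of two solutions satisfies the linear equation \<open>d' = (u + v) d\<close>.\<close>
  have "0 \<le> u t - v t"
    if du: "\<And>s. s \<in> {a..b} \<Longrightarrow> (u has_real_derivative u s ^ 2 + r s) (at s within {a..b})"
      and dv: "\<And>s. s \<in> {a..b} \<Longrightarrow> (v has_real_derivative v s ^ 2 + r s) (at s within {a..b})"
      and "u b = v b" for u v
  proof (rule backward_comparison_nonneg[where D = "\<lambda>s. u s - v s"
        and D' = "\<lambda>s. (u s + v s) * (u s - v s)" and q = "\<lambda>s. u s + v s"])
    show "((\<lambda>s. u s - v s) has_real_derivative (u s + v s) * (u s - v s)) (at s within {a..b})"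
      if "s \<in> {a..b}" for s
      using DERIV_diff[OF du[OF that] dv[OF that]] by (simp add: algebra_simps power2_eq_square)
    show "continuous_on {a..b} (\<lambda>s. u s + v s)"
      using DERIV_continuous_on[OF du] DERIV_continuous_on[OF dv] by (intro continuous_intros)
  qed (use \<open>u b = v b\<close> \<open>t \<in> {a..b}\<close> in auto)
  from this[OF f g] this[OF g f] \<open>f b = g b\<close> show ?thesis by simp
qed

section \<open>The scalar Riccati equation\<close>

text \<open>In the time to go \<open>s\<close> this is \<open>u'/u\<close> with \<open>u'' = w\<^sup>2 u\<close>, normalised to the value \<open>a\<close> at \<open>s = 0\<close>.\<close>

definition riccati_solution :: "real \<Rightarrow> real \<Rightarrow> real \<Rightarrow> real" where
  "riccati_solution w a s =
     ((- (w ^ 2) - a * w) * exp (2 * w * s) + w ^ 2 - a * w) / ((- w - a) * exp (2 * w * s) - w + a)"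

lemma riccati_solution_eq:
  assumes "0 < w" "0 \<le> a" "0 \<le> s"
  shows "riccati_solution w a s =
    ((w ^ 2 + a * w) * exp (2 * w * s) - w ^ 2 + a * w) / ((w + a) * exp (2 * w * s) + w - a)"
    and "2 * w \<le> (w + a) * exp (2 * w * s) + w - a"
proof -
  have "w + a \<le> (w + a) * exp (2 * w * s)"
    using assms by (simp add: mult_le_cancel_left1)
  then show "2 * w \<le> (w + a) * exp (2 * w * s) + w - a" by simp
  show "riccati_solution w a s =
    ((w ^ 2 + a * w) * exp (2 * w * s) - w ^ 2 + a * w) / ((w + a) * exp (2 * w * s) + w - a)"
  proof -
    have neg: "x / y = (- x) / (- y)" for x y :: real by simp
    show ?thesis
      unfolding riccati_solution_def by (subst (1) neg) (simp add: algebra_simps)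
  qed
qed

lemma riccati_solution_bounds:
  assumes "0 < w" "0 \<le> a" "0 \<le> s"
  shows "0 \<le> riccati_solution w a s" "riccati_solution w a s \<le> a + w"
    and "0 < a \<Longrightarrow> 0 < riccati_solution w a s"
proof -
  define E where "E = exp (2 * w * s)"
  define N where "N = (w ^ 2 + a * w) * E - w ^ 2 + a * w"
  have "1 \<le> E" using assms by (simp add: E_def)
  then have "(w ^ 2 + a * w) * 1 \<le> (w ^ 2 + a * w) * E" "a * (w + a) * 1 \<le> a * (w + a) * E"
    using assms by (intro mult_left_mono; simp)+
  moreover have "(a + w) * ((w + a) * E + w - a) - N = a * (w + a) * E - a * (w + a) * 1 + 2 * w ^ 2"
    by (simp add: N_def algebra_simps power2_eq_square)
  moreover have "0 \<le> a * w" using assms by simp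
  ultimately have "2 * (a * w) \<le> N" "N \<le> (a + w) * ((w + a) * E + w - a)"
    using N_def by (smt (verit) zero_le_power2)+
  then have "0 \<le> N" "0 < a \<Longrightarrow> 0 < N"
    using assms by (smt (verit) mult_nonneg_nonneg mult_pos_pos)+
  moreover have "riccati_solution w a s = N / ((w + a) * E + w - a)"
    and den: "2 * w \<le> (w + a) * E + w - a"
    using riccati_solution_eq[OF assms] by (simp_all add: E_def N_def)
  ultimately show "0 \<le> riccati_solution w a s" "riccati_solution w a s \<le> a + w"
    and "0 < a \<Longrightarrow> 0 < riccati_solution w a s"
    using assms \<open>N \<le> _\<close> by (auto simp: divide_le_eq)
qed

lemma riccati_solution_0: "0 < w \<Longrightarrow> riccati_solution w a 0 = a"
  unfolding riccati_solution_def by (simp add: field_simps power2_eq_square)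

lemma has_real_derivative_riccati_solution:
  assumes "0 < w" "0 \<le> a" "t \<le> T"
  shows "((\<lambda>t. riccati_solution w a (T - t)) has_real_derivative
           riccati_solution w a (T - t) ^ 2 - w ^ 2) (at t within S)"
proof -
  define E where "E = exp (2 * w * (T - t))"
  define N where "N = (- (w ^ 2) - a * w) * E + w ^ 2 - a * w"
  define D where "D = (- w - a) * E - w + a"
  have "D \<noteq> 0"
    using riccati_solution_eq(2)[OF assms(1,2), of "T - t"] assms by (simp add: D_def E_def algebra_simps)
  define X where "X = ((- (w ^ 2) - a * w) * (E * (- 2 * w)) * D - N * ((- w - a) * (E * (- 2 * w)))) / D ^ 2"
  have "X = (N ^ 2 - w ^ 2 * D ^ 2) / D ^ 2"
    unfolding X_def N_def D_def by algebra
  also have "\<dots> = (N / D) ^ 2 - w ^ 2"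
    using \<open>D \<noteq> 0\<close> by (simp add: power_divide diff_divide_distrib)
  also have "N / D = riccati_solution w a (T - t)"
    by (simp add: riccati_solution_def N_def D_def E_def)
  finally have X: "X = riccati_solution w a (T - t) ^ 2 - w ^ 2" .
  have "((\<lambda>t. riccati_solution w a (T - t)) has_real_derivative X) (at t within S)"
    unfolding riccati_solution_def
    by (rule derivative_eq_intros refl)+ (use \<open>D \<noteq> 0\<close> in \<open>simp_all add: X_def E_def N_def D_def power2_eq_square\<close>)
  then show ?thesis by (simp only: X)
qed

lemma riccati_solution_sqrt:
  assumes "0 \<le> x"
  shows "riccati_solution (sqrt x) a s =
    ((- x - a * sqrt x) * exp (2 * sqrt x * s) + x - a * sqrt x) / ((- sqrt x - a) * exp (2 * sqrt x * s) - sqrt x + a)"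
  using assms by (simp add: riccati_solution_def)

section \<open>The hierarchy\<close>

locale backward_riccati_system =
  fixes c eps T :: real and phi :: "nat \<Rightarrow> real \<Rightarrow> real"
  assumes c_pos: "c > 0" and eps_pos: "eps > 0" and T_pos: "T > 0"
    and ode0: "\<forall>t\<in>{0..T}. (phi 0 has_real_derivative (phi 0 t)^2 - eps) (at t within {0..T})"
    and fin0: "phi 0 T = c"
    and ode1: "\<forall>t\<in>{0..T}. (phi 1 has_real_derivative 2 * phi 0 t * phi 1 t + eps) (at t within {0..T})"
    and fin1: "phi 1 T = - c"
    and odej: "\<forall>j\<ge>2. \<forall>t\<in>{0..T}.
               (phi j has_real_derivative (\<Sum>k=0..j. phi k t * phi (j - k) t)) (at t within {0..T})"
    and finj: "\<forall>j\<ge>2. phi j T = 0"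
begin

text \<open>The term \<open>dipole (- eps)\<close> supplies the forcing \<open>- eps\<close> and \<open>+ eps\<close> in the equations for
  \<open>phi 0\<close> and \<open>phi 1\<close>.\<close>

definition rhs :: "nat \<Rightarrow> real \<Rightarrow> real" where
  "rhs k t = (\<Sum>i=0..k. phi i t * phi (k - i) t) + dipole (- eps) k"

lemma phi_has_derivative:
  assumes "t \<in> {0..T}"
  shows "(phi k has_real_derivative rhs k t) (at t within {0..T})"
proof -
  consider "k = 0" | "k = 1" | "2 \<le> k" by linarith
  then show ?thesis
  proof cases
    case 1
    with ode0 assms show ?thesis by (simp add: rhs_def dipole_def power2_eq_square)
  next
    case 2
    with ode1 assms show ?thesis by (simp add: rhs_def dipole_def mult.assoc)
  next
    case 3
    with odej assms show ?thesis by (simp add: rhs_def dipole_def)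
  qed
qed

lemma phi_at_T: "phi k T = dipole c k"
proof -
  consider "k = 0" | "k = 1" | "2 \<le> k" by linarith
  then show ?thesis by cases (use fin0 fin1 finj in \<open>auto simp: dipole_def\<close>)
qed

lemma continuous_on_phi: "continuous_on {0..T} (phi k)"
  using phi_has_derivative by (rule DERIV_continuous_on)

lemma phi_nonpos:
  assumes "1 \<le> j" "t \<in> {0..T}"
  shows "phi j t \<le> 0"
  using assms
proof (induction j arbitrary: t rule: less_induct)
  case (less j)
  have "0 \<le> - phi j t"
  proof (rule backward_comparison_nonneg[where D = "\<lambda>s. - phi j s" and D' = "\<lambda>s. - rhs j s"
        and q = "\<lambda>s. 2 * phi 0 s"])
    show "((\<lambda>s. - phi j s) has_real_derivative - rhs j s) (at s within {0..T})" if "s \<in> {0..T}" for s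
      using phi_has_derivative[OF that] by (rule DERIV_minus)
    show "continuous_on {0..T} (\<lambda>s. 2 * phi 0 s)"
      by (intro continuous_intros continuous_on_phi)
    show "0 \<le> - phi j T"
      using less.prems c_pos by (simp add: phi_at_T dipole_def)
    show "- rhs j s \<le> 2 * phi 0 s * - phi j s" if s: "s \<in> {0..T}" for s
    proof -
      have "2 * phi 0 s * phi j s = (\<Sum>i\<in>{0, j}. phi i s * phi (j - i) s)"
        using less.prems by simp
      also have "\<dots> \<le> (\<Sum>i=0..j. phi i s * phi (j - i) s)"
      proof (rule sum_mono2)
        fix i assume "i \<in> {0..j} - {0, j}"
        then have "1 \<le> i" "i < j" "1 \<le> j - i" "j - i < j" by auto
        then show "0 \<le> phi i s * phi (j - i) s"
          using less.IH[of i s] less.IH[of "j - i" s] s by (simp add: mult_nonpos_nonpos)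
      qed auto
      finally show ?thesis
        using less.prems eps_pos by (simp add: rhs_def dipole_def)
    qed
  qed (use less.prems in auto)
  then show ?case by simp
qed

lemma partial_sum_phi_nonneg:
  assumes "2 \<le> n" "t \<in> {0..T}"
  shows "0 \<le> (\<Sum>k<n. phi k t)"
proof (rule backward_comparison_nonneg[where D = "\<lambda>s. \<Sum>k<n. phi k s" and D' = "\<lambda>s. \<Sum>k<n. rhs k s"
      and q = "\<lambda>s. \<Sum>k<n. phi k s"])
  show "((\<lambda>s. \<Sum>k<n. phi k s) has_real_derivative (\<Sum>k<n. rhs k s)) (at s within {0..T})"
    if "s \<in> {0..T}" for s
    using phi_has_derivative[OF that] by (rule DERIV_sum)
  show "continuous_on {0..T} (\<lambda>s. \<Sum>k<n. phi k s)"
    by (intro continuous_intros continuous_on_phi)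
  show "0 \<le> (\<Sum>k<n. phi k T)"
    using assms by (simp add: phi_at_T sum_lessThan_dipole)
  show "(\<Sum>k<n. rhs k s) \<le> (\<Sum>k<n. phi k s) * (\<Sum>k<n. phi k s)" if "s \<in> {0..T}" for s
  proof -
    have "(\<Sum>k<n. rhs k s) = (\<Sum>k<n. \<Sum>i=0..k. phi i s * phi (k - i) s)"
      using assms by (simp add: rhs_def sum.distrib sum_lessThan_dipole)
    also have "\<dots> \<le> (\<Sum>k<n. phi k s) ^ 2"
      by (rule sum_convolution_le_square) (use phi_nonpos that in auto)
    finally show ?thesis by (simp add: power2_eq_square)
  qed
qed (use assms in auto)

lemma neg_phi_le_phi0:
  assumes "1 \<le> k" "t \<in> {0..T}"
  shows "- phi k t \<le> phi 0 t"
proof -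
  have "(\<Sum>i\<in>{0, k}. - phi i t) \<le> (\<Sum>i<Suc k. - phi i t)"
  proof (rule sum_mono2)
    fix i assume "i \<in> {..<Suc k} - {0, k}"
    then show "0 \<le> - phi i t"
      using phi_nonpos[of i t] assms(2) by simp
  qed auto
  moreover have "0 \<le> (\<Sum>i<Suc k. phi i t)"
    using partial_sum_phi_nonneg[of "Suc k" t] assms by simp
  ultimately show ?thesis
    using assms by (simp add: sum_negf)
qed

lemma phi_bounded:
  obtains K where "0 < K" "\<And>k t. t \<in> {0..T} \<Longrightarrow> \<bar>phi k t\<bar> \<le> K"
proof -
  have "bounded (phi 0 ` {0..T})"
    by (intro compact_imp_bounded compact_continuous_image continuous_on_phi compact_Icc)
  then obtain K where "0 < K" and K: "\<And>t. t \<in> {0..T} \<Longrightarrow> \<bar>phi 0 t\<bar> \<le> K"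
    unfolding bounded_pos by auto
  have "\<bar>phi k t\<bar> \<le> K" if "t \<in> {0..T}" for k t
  proof (cases "k = 0")
    case False
    then show ?thesis
      using phi_nonpos[of k t] neg_phi_le_phi0[of k t] K[OF that] that by simp
  qed (use K that in simp)
  with \<open>0 < K\<close> that show ?thesis by blast
qed

lemma abs_rhs_le:
  assumes "\<And>k. \<bar>phi k t\<bar> \<le> K"
  shows "\<bar>rhs k t\<bar> \<le> real (Suc k) * K ^ 2 + eps"
proof -
  have "0 \<le> K"
    using abs_ge_zero[of "phi 0 t"] assms[of 0] by linarith
  have "\<bar>\<Sum>i=0..k. phi i t * phi (k - i) t\<bar> \<le> (\<Sum>i=0..k. K * K)"
    by (rule order_trans[OF sum_abs sum_mono])
      (use assms \<open>0 \<le> K\<close> in \<open>auto simp: abs_mult intro!: mult_mono\<close>)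
  moreover have "\<bar>dipole (- eps) k\<bar> \<le> eps"
    using abs_dipole_le[of "- eps" k] eps_pos by simp
  moreover have "(\<Sum>i=0..k. K * K) = real (Suc k) * K ^ 2"
    by (simp add: power2_eq_square)
  ultimately show ?thesis
    unfolding rhs_def
    using abs_triangle_ineq[of "\<Sum>i=0..k. phi i t * phi (k - i) t" "dipole (- eps) k"] by linarith
qed

lemma summable_abs_power_phi:
  assumes "0 \<le> z" "z < 1" "t \<in> {0..T}"
  shows "summable (\<lambda>k. \<bar>z ^ k * phi k t\<bar>)"
proof -
  obtain K where K: "\<And>k. \<bar>phi k t\<bar> \<le> K"
    using phi_bounded assms(3) by metis
  show ?thesis
  proof (rule summable_comparison_test'[where g = "\<lambda>k. K * z ^ k" and N = 0])
    show "summable (\<lambda>k. K * z ^ k)"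
      using assms by (intro summable_mult summable_geometric) auto
    show "norm \<bar>z ^ k * phi k t\<bar> \<le> K * z ^ k" for k
      using mult_left_mono[OF K[of k], of "z ^ k"] assms by (simp add: abs_mult mult.commute)
  qed
qed

lemma generating_function_has_derivative:
  assumes "0 \<le> z" "z < 1"
  obtains g where "\<And>t. t \<in> {0..T} \<Longrightarrow> (\<lambda>k. z ^ k * phi k t) sums g t"
    and "\<And>t. t \<in> {0..T} \<Longrightarrow> (g has_real_derivative (\<Sum>k. z ^ k * rhs k t)) (at t within {0..T})"
proof -
  obtain K where K: "\<And>k t. t \<in> {0..T} \<Longrightarrow> \<bar>phi k t\<bar> \<le> K"
    using phi_bounded by metis
  define M where "M k = z ^ k * (real (Suc k) * K ^ 2 + eps)" for k
  have "summable (\<lambda>k. K ^ 2 * (real (Suc k) * z ^ k) + eps * z ^ k)"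
    using assms by (intro summable_add summable_mult summable_Suc_times_power summable_geometric) auto
  then have "summable M"
    unfolding M_def by (simp add: algebra_simps)
  moreover have "norm (z ^ k * rhs k t) \<le> M k" if "t \<in> {0..T}" for k t
    using mult_left_mono[OF abs_rhs_le[OF K[OF that]], of "z ^ k"] assms by (simp add: M_def abs_mult)
  ultimately have "uniform_limit {0..T} (\<lambda>n t. \<Sum>k<n. z ^ k * rhs k t) (\<lambda>t. \<Sum>k. z ^ k * rhs k t) sequentially"
    by (intro Weierstrass_m_test)
  then have "\<exists>g. \<forall>t\<in>{0..T}. (\<lambda>k. z ^ k * phi k t) sums g t
      \<and> (g has_field_derivative (\<Sum>k. z ^ k * rhs k t)) (at t within {0..T})"
  proof (rule has_field_derivative_series[rotated 2])
    show "((\<lambda>t. z ^ k * phi k t) has_field_derivative z ^ k * rhs k t) (at t within {0..T})"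
      if "t \<in> {0..T}" for k t
      using phi_has_derivative[OF that] by (rule DERIV_cmult)
    show "summable (\<lambda>k. z ^ k * phi k T)"
      using summable_abs_power_phi[of z T] assms T_pos by (auto intro: summable_rabs_cancel)
  qed (use T_pos in auto)
  with that show ?thesis by blast
qed

lemma power_series_rhs_sums:
  assumes "0 \<le> z" "z < 1" "t \<in> {0..T}" and y: "(\<lambda>k. z ^ k * phi k t) sums y"
  shows "(\<lambda>k. z ^ k * rhs k t) sums (y ^ 2 - eps * (1 - z))"
proof -
  define a where "a k = z ^ k * phi k t" for k
  have "summable (\<lambda>k. norm (a k))"
    using summable_abs_power_phi[OF assms(1-3)] by (simp add: a_def)
  then have "(\<lambda>k. \<Sum>i\<le>k. a i * a (k - i)) sums (y * y)"
    using Cauchy_product_sums[of a a] sums_unique[OF y] by (simp add: a_def)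
  moreover have conv: "z ^ k * (\<Sum>i=0..k. phi i t * phi (k - i) t) = (\<Sum>i\<le>k. a i * a (k - i))" for k
    unfolding sum_distrib_left atLeast0AtMost
  proof (rule sum.cong[OF refl])
    fix i assume "i \<in> {..k}"
    then have "z ^ k = z ^ i * z ^ (k - i)" by (simp flip: power_add)
    then show "z ^ k * (phi i t * phi (k - i) t) = a i * a (k - i)" by (simp add: a_def)
  qed
  ultimately have "(\<lambda>k. z ^ k * rhs k t) sums (y * y + - eps * (1 - z))"
    using sums_add[OF _ sums_power_dipole[of z "- eps"]] by (simp add: rhs_def distrib_left conv)
  then show ?thesis by (simp add: power2_eq_square)
qed

theorem generating_function_sums:
  assumes "0 \<le> z" "z < 1" "t \<in> {0..T}"
  shows "(\<lambda>k. z ^ k * phi k t) sums riccati_solution (sqrt (eps * (1 - z))) (c * (1 - z)) (T - t)"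
proof -
  define w where "w = sqrt (eps * (1 - z))"
  define G where "G = (\<lambda>s. riccati_solution w (c * (1 - z)) (T - s))"
  have "0 < w" "w ^ 2 = eps * (1 - z)" "0 \<le> c * (1 - z)"
    using assms eps_pos c_pos by (simp_all add: w_def)
  obtain g where g_sums: "\<And>s. s \<in> {0..T} \<Longrightarrow> (\<lambda>k. z ^ k * phi k s) sums g s"
    and g_deriv: "\<And>s. s \<in> {0..T} \<Longrightarrow> (g has_real_derivative (\<Sum>k. z ^ k * rhs k s)) (at s within {0..T})"
    using generating_function_has_derivative[OF assms(1,2)] by blast
  have "(g has_real_derivative g s ^ 2 + - (w ^ 2)) (at s within {0..T})" if "s \<in> {0..T}" for s
  proof -
    have "(\<Sum>k. z ^ k * rhs k s) = g s ^ 2 - eps * (1 - z)"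
      using power_series_rhs_sums[OF assms(1,2) that g_sums[OF that]] by (rule sums_unique[symmetric])
    with g_deriv[OF that] \<open>w ^ 2 = _\<close> show ?thesis by simp
  qed
  moreover have "(G has_real_derivative G s ^ 2 + - (w ^ 2)) (at s within {0..T})" if "s \<in> {0..T}" for s
    using has_real_derivative_riccati_solution[OF \<open>0 < w\<close> \<open>0 \<le> c * (1 - z)\<close>, of s T] that
    unfolding G_def by simp
  moreover have "(\<lambda>k. z ^ k * phi k T) sums (c * (1 - z))"
    using sums_power_dipole[of z c] by (simp add: phi_at_T)
  then have "g T = G T"
    using sums_unique2[OF g_sums[of T]] T_pos riccati_solution_0[OF \<open>0 < w\<close>] by (simp add: G_def)
  ultimately have "g t = G t"
    by (rule backward_riccati_unique[where r = "\<lambda>_. - (w ^ 2)"]) (use assms(3) in auto)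
  then show ?thesis
    using g_sums[OF assms(3)] by (simp add: G_def w_def)
qed

lemma phi0_eq_riccati_solution:
  assumes "t \<in> {0..T}"
  shows "phi 0 t = riccati_solution (sqrt eps) c (T - t)"
proof -
  have "(\<lambda>k. 0 ^ k * phi k t) sums phi 0 t"
    using powser_sums_zero[of "\<lambda>k. phi k t"] by (simp add: mult.commute)
  moreover have "(\<lambda>k. 0 ^ k * phi k t) sums riccati_solution (sqrt eps) c (T - t)"
    using generating_function_sums[of 0 t] assms by simp
  ultimately show ?thesis by (rule sums_unique2)
qed

lemma phi0_pos: "t \<in> {0..T} \<Longrightarrow> 0 < phi 0 t"
  using riccati_solution_bounds(3)[of "sqrt eps" c "T - t"] c_pos eps_pos
  by (simp add: phi0_eq_riccati_solution)

lemma sum_atMost_phi_nonneg: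
  assumes "t \<in> {0..T}"
  shows "0 \<le> (\<Sum>k\<le>n. phi k t)"
proof (cases n)
  case 0
  then show ?thesis using phi0_pos[OF assms] by simp
next
  case Suc
  then show ?thesis
    using partial_sum_phi_nonneg[of "Suc n" t] assms by (simp add: lessThan_Suc_atMost)
qed

lemma summable_abs_phi:
  assumes "t \<in> {0..T}"
  shows "summable (\<lambda>k. \<bar>phi k t\<bar>)"
proof (rule bounded_imp_summable)
  fix n
  \<comment> \<open>All terms but the first are nonpositive, so \<open>\<Sum>|phi k| = 2 phi 0 - \<Sum>phi k\<close>.\<close>
  have "(\<Sum>k\<le>n. \<bar>phi k t\<bar>) = (\<Sum>k\<le>n. (if k = 0 then 2 * phi 0 t else 0) - phi k t)"
    by (rule sum.cong) (use phi0_pos phi_nonpos assms in \<open>auto simp: less_imp_le\<close>)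
  also have "\<dots> \<le> 2 * phi 0 t"
    using sum_atMost_phi_nonneg[OF assms, of n] by (simp add: sum_subtractf)
  finally show "(\<Sum>k\<le>n. \<bar>phi k t\<bar>) \<le> 2 * phi 0 t" .
qed simp

lemma suminf_phi_le:
  assumes "0 \<le> z" "z < 1" "t \<in> {0..T}"
  shows "(\<Sum>k. phi k t) \<le> c * (1 - z) + sqrt (eps * (1 - z))"
proof -
  have "(\<Sum>k. phi k t) \<le> (\<Sum>k. z ^ k * phi k t)"
  proof (rule suminf_le)
    show "phi k t \<le> z ^ k * phi k t" for k
    proof (cases "k = 0")
      case False
      then have "z ^ k * - phi k t \<le> 1 * - phi k t"
        using phi_nonpos[of k t] assms power_le_one[of z k] by (intro mult_right_mono) auto
      then show ?thesis by simp
    qed simp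
  qed (use summable_rabs_cancel[OF summable_abs_phi] summable_rabs_cancel[OF summable_abs_power_phi]
      assms in auto)
  also have "\<dots> = riccati_solution (sqrt (eps * (1 - z))) (c * (1 - z)) (T - t)"
    using generating_function_sums[OF assms] by (rule sums_unique[symmetric])
  also have "\<dots> \<le> c * (1 - z) + sqrt (eps * (1 - z))"
    using riccati_solution_bounds(2) assms c_pos eps_pos by simp
  finally show ?thesis .
qed

theorem phi_sums_zero:
  assumes "t \<in> {0..T}"
  shows "(\<lambda>k. phi k t) sums 0"
proof -
  have "summable (\<lambda>k. phi k t)"
    using summable_abs_phi[OF assms] by (rule summable_rabs_cancel)
  moreover have "0 \<le> (\<Sum>k. phi k t)"
    using summable_LIMSEQ'[OF \<open>summable _\<close>] sum_atMost_phi_nonneg[OF assms]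
    by (intro LIMSEQ_le_const) auto
  moreover have "(\<Sum>k. phi k t) \<le> 0"
  proof (rule tendsto_le[where F = "at_right 0"])
    have "((\<lambda>u. c * u + sqrt (eps * u)) \<longlongrightarrow> c * 0 + sqrt (eps * 0)) (at_right 0)"
      by (intro tendsto_intros)
    then show "((\<lambda>u. c * u + sqrt (eps * u)) \<longlongrightarrow> 0) (at_right 0)" by simp
    have "(\<Sum>k. phi k t) \<le> c * u + sqrt (eps * u)" if "u \<in> {0<..<1}" for u
      using suminf_phi_le[of "1 - u" t] assms that by simp
    then show "\<forall>\<^sub>F u in at_right 0. (\<Sum>k. phi k t) \<le> c * u + sqrt (eps * u)"
      using eventually_at_right_real[of 0 1] by (auto elim: eventually_mono)
  qed auto
  ultimately show ?thesis
    by (metis antisym summable_sums)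
qed

end

theorem mainTheorem2:
  fixes c eps T :: real and phi :: "nat \<Rightarrow> real \<Rightarrow> real"
  assumes c_pos: "c > 0" and eps_pos: "eps > 0" and T_pos: "T > 0"
    and ode0: "\<forall>t\<in>{0..T}. (phi 0 has_real_derivative (phi 0 t)^2 - eps) (at t within {0..T})"
    and fin0: "phi 0 T = c"
    and ode1: "\<forall>t\<in>{0..T}. (phi 1 has_real_derivative 2 * phi 0 t * phi 1 t + eps) (at t within {0..T})"
    and fin1: "phi 1 T = - c"
    and odej: "\<forall>j\<ge>2. \<forall>t\<in>{0..T}.
               (phi j has_real_derivative (\<Sum>k=0..j. phi k t * phi (j - k) t)) (at t within {0..T})"
    and finj: "\<forall>j\<ge>2. phi j T = 0"
  shows "\<forall>t\<in>{0..T}.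
     phi 0 t = ((- eps - c * sqrt eps) * exp (2 * sqrt eps * (T - t)) + eps - c * sqrt eps)
               / ((- sqrt eps - c) * exp (2 * sqrt eps * (T - t)) - sqrt eps + c)
   \<and> phi 0 t > 0
   \<and> (\<lambda>j. phi j t) sums 0
   \<and> (\<forall>z::real. 0 \<le> z \<and> z < 1 \<longrightarrow>
        (\<lambda>k. z ^ k * phi k t) sums
          (((- eps * (1 - z) - c * sqrt (eps * (1 - z)) * (1 - z)) * exp (2 * sqrt (eps * (1 - z)) * (T - t))
              + eps * (1 - z) - c * sqrt (eps * (1 - z)) * (1 - z))
           / ((- sqrt (eps * (1 - z)) - c * (1 - z)) * exp (2 * sqrt (eps * (1 - z)) * (T - t))
              - sqrt (eps * (1 - z)) + c * (1 - z))))"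
proof -
  interpret backward_riccati_system c eps T phi
    using assms by unfold_locales
  show ?thesis
  proof (intro ballI conjI allI impI)
    fix t assume t: "t \<in> {0..T}"
    show "phi 0 t = ((- eps - c * sqrt eps) * exp (2 * sqrt eps * (T - t)) + eps - c * sqrt eps)
               / ((- sqrt eps - c) * exp (2 * sqrt eps * (T - t)) - sqrt eps + c)"
      using phi0_eq_riccati_solution[OF t] riccati_solution_sqrt[of eps] eps_pos by simp
    show "0 < phi 0 t"
      using phi0_pos[OF t] .
    show "(\<lambda>j. phi j t) sums 0"
      using phi_sums_zero[OF t] .
    show "(\<lambda>k. z ^ k * phi k t) sums
          (((- eps * (1 - z) - c * sqrt (eps * (1 - z)) * (1 - z)) * exp (2 * sqrt (eps * (1 - z)) * (T - t))
              + eps * (1 - z) - c * sqrt (eps * (1 - z)) * (1 - z))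
           / ((- sqrt (eps * (1 - z)) - c * (1 - z)) * exp (2 * sqrt (eps * (1 - z)) * (T - t))
              - sqrt (eps * (1 - z)) + c * (1 - z)))" if "0 \<le> z \<and> z < 1" for z
      using generating_function_sums[of z t] riccati_solution_sqrt[of "eps * (1 - z)" "c * (1 - z)"]
        that t eps_pos by (simp add: mult_ac)
  qed
qed

end
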